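(* Let $d \ge 1$ and $L \ge 1$ be integers. For $l = 0, 1, \dots, L-1$ let ${\bf w}_l^{VV}, {\bf w}_l^{EV}, {\bf w}_l^{VE}, {\bf w}_l^{EE} \in \mathbb R^d$ and ${\bf b}_l^V, {\bf b}_l^E \in \mathbb R^d$ be parameter vectors. Given input vectors ${\bf v} = [v_1 \ \cdots \ v_d]^\top$ and ${\bf e} = [e_1 \ \cdots \ e_d]^\top$, set ${\bf v}_0 = {\bf v}$, ${\bf e}_0 = {\bf e}$ and, for $l = 0, \dots, L-1$, $$ {\bf v}_{l+1} = {\bf v}_l {\bf e}_l^\top {\bf w}_l^{VV} + {\bf e}_l {\bf v}_l^\top {\bf w}_l^{EV} + {\bf b}_l^V, \qquad {\bf e}_{l+1} = {\bf v}_l {\bf e}_l^\top {\bf w}_l^{VE} + {\bf e}_l {\bf v}_l^\top {\bf w}_l^{EE} + {\bf b}_l^E. $$ Then the cross terms in ${\bf v}$ and ${\bf e}$ of maximal degree in $\|{\bf v}_L\|_1$ and in $\|{\bf e}_L\|_1$ (viewed as polynomial expressions in $v_1,\dots,v_d,e_1,\dots,e_d$ inside the absolute value) are of the form $k_{\boldsymbol\alpha,\boldsymbol\beta}\, v_1^{\alpha_1}\cdots v_d^{\alpha_d} e_1^{\beta_1}\cdots e_d^{\beta_d}$ with $k_{\boldsymbol\alpha,\boldsymbol\beta} \in \mathbb R$, $\alpha_i, \beta_i \in \mathbb N$, $\alpha_1 + \cdots + \alpha_d = 2^{L-1}$ and $\beta_1 + \cdots + \beta_d = 2^{L-1}$.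
   Context: The map $({\bf v}_l,{\bf e}_l)\mapsto({\bf v}_{l+1},{\bf e}_{l+1})$ above is the "cross\&compress unit": ${\bf C}_l = {\bf v}_l{\bf e}_l^\top$ is the cross feature matrix and ${\bf v}_{l+1} = {\bf C}_l{\bf w}_l^{VV} + {\bf C}_l^\top{\bf w}_l^{EV} + {\bf b}_l^V$, ${\bf e}_{l+1} = {\bf C}_l{\bf w}_l^{VE} + {\bf C}_l^\top{\bf w}_l^{EE} + {\bf b}_l^E$. In this statement, for ${\bf x} = [x^{(1)} \ \cdots \ x^{(d)}]^\top$, the notation $\|{\bf x}\|_1$ denotes $\left|\sum_{i=1}^d x^{(i)}\right|$. A cross term is a monomial involving both entries of ${\bf v}$ and entries of ${\bf e}$. *)

theory Defs
  imports Complex_Main "HOL-Library.Poly_Mapping"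
begin

text \<open>Formal real polynomials in the 2d variables v_1..v_d (encoded as Inl i, i < d)
  and e_1..e_d (encoded as Inr i, i < d).\<close>

type_synonym mono = "(nat + nat) \<Rightarrow>\<^sub>0 nat"
type_synonym rpoly = "mono \<Rightarrow>\<^sub>0 real"

definition pconst :: "real \<Rightarrow> rpoly" where
  "pconst c = Poly_Mapping.single 0 c"

definition pvar :: "nat + nat \<Rightarrow> rpoly" where
  "pvar x = Poly_Mapping.single (Poly_Mapping.single x 1) 1"

definition pdot :: "nat \<Rightarrow> (nat \<Rightarrow> rpoly) \<Rightarrow> (nat \<Rightarrow> real) \<Rightarrow> rpoly" where
  "pdot d x w = (\<Sum>j<d. x j * pconst (w j))"

text \<open>Returns (v_l, e_l) as polynomial vectors.
  v_{l+1} = v_l e_l^T wVV + e_l v_l^T wEV + bV, componentwise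
  (v_l e_l^T w)_i = v_l,i (e_l . w).\<close>
primrec cross_compress ::
  "nat \<Rightarrow> (nat \<Rightarrow> nat \<Rightarrow> real) \<Rightarrow> (nat \<Rightarrow> nat \<Rightarrow> real) \<Rightarrow> (nat \<Rightarrow> nat \<Rightarrow> real)
   \<Rightarrow> (nat \<Rightarrow> nat \<Rightarrow> real) \<Rightarrow> (nat \<Rightarrow> nat \<Rightarrow> real) \<Rightarrow> (nat \<Rightarrow> nat \<Rightarrow> real)
   \<Rightarrow> nat \<Rightarrow> (nat \<Rightarrow> rpoly) \<times> (nat \<Rightarrow> rpoly)" where
  "cross_compress d wVV wEV wVE wEE bV bE 0 = ((\<lambda>i. pvar (Inl i)), (\<lambda>i. pvar (Inr i)))"
| "cross_compress d wVV wEV wVE wEE bV bE (Suc l) =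
     (let (v, e) = cross_compress d wVV wEV wVE wEE bV bE l in
      ((\<lambda>i. v i * pdot d e (wVV l) + e i * pdot d v (wEV l) + pconst (bV l i)),
       (\<lambda>i. v i * pdot d e (wVE l) + e i * pdot d v (wEE l) + pconst (bE l i))))"

text \<open>The polynomial inside the absolute value of ||x||_1 = |sum_i x_i|.\<close>
definition psum :: "nat \<Rightarrow> (nat \<Rightarrow> rpoly) \<Rightarrow> rpoly" where
  "psum d x = (\<Sum>i<d. x i)"

definition vdeg :: "nat \<Rightarrow> mono \<Rightarrow> nat" where
  "vdeg d m = (\<Sum>i<d. Poly_Mapping.lookup m (Inl i))"
definition edeg :: "nat \<Rightarrow> mono \<Rightarrow> nat" where
  "edeg d m = (\<Sum>i<d. Poly_Mapping.lookup m (Inr i))"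

definition cross_terms :: "nat \<Rightarrow> rpoly \<Rightarrow> mono set" where
  "cross_terms d p = {m \<in> Poly_Mapping.keys p. vdeg d m > 0 \<and> edeg d m > 0}"

end

theory Submission
  imports Defs
begin

text \<open>Each layer multiplies a component of one vector by a linear combination of the components
  of the other, so bounds on the v-degree and on the e-degree add up. Starting from the bidegrees
  (1,0) of v and (0,1) of e, every component after L layers has v-degree and e-degree at most
  2^(L-1); hence a monomial of total degree 2^L must attain both bounds.\<close>

definition bidegree_le :: "nat \<Rightarrow> nat \<Rightarrow> nat \<Rightarrow> rpoly \<Rightarrow> bool" where
  "bidegree_le d a b p \<longleftrightarrow> (\<forall>m \<in> Poly_Mapping.keys p. vdeg d m \<le> a \<and> edeg d m \<le> b)"

lemma vdeg_add: "vdeg d (m + m') = vdeg d m + vdeg d m'"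
  by (simp add: vdeg_def lookup_add sum.distrib)

lemma edeg_add: "edeg d (m + m') = edeg d m + edeg d m'"
  by (simp add: edeg_def lookup_add sum.distrib)

lemma bidegree_le_mult:
  assumes "bidegree_le d a b p" and "bidegree_le d a' b' q"
  shows "bidegree_le d (a + a') (b + b') (p * q)"
  unfolding bidegree_le_def
proof
  fix m assume "m \<in> Poly_Mapping.keys (p * q)"
  then obtain m1 m2 where "m = m1 + m2" "m1 \<in> Poly_Mapping.keys p" "m2 \<in> Poly_Mapping.keys q"
    using keys_mult by blast
  moreover have "vdeg d m1 \<le> a" "edeg d m1 \<le> b" "vdeg d m2 \<le> a'" "edeg d m2 \<le> b'"
    using assms \<open>m1 \<in> _\<close> \<open>m2 \<in> _\<close> by (auto simp: bidegree_le_def)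
  ultimately show "vdeg d m \<le> a + a' \<and> edeg d m \<le> b + b'"
    by (simp add: vdeg_add edeg_add)
qed

lemma bidegree_le_add:
  "bidegree_le d a b p \<Longrightarrow> bidegree_le d a b q \<Longrightarrow> bidegree_le d a b (p + q)"
  unfolding bidegree_le_def using keys_add by fastforce

lemma bidegree_le_sum:
  "(\<And>i. i \<in> A \<Longrightarrow> bidegree_le d a b (f i)) \<Longrightarrow> bidegree_le d a b (sum f A)"
  unfolding bidegree_le_def using keys_sum by fastforce

lemma bidegree_le_pconst: "bidegree_le d a b (pconst c)"
  by (simp add: bidegree_le_def pconst_def vdeg_def edeg_def)

lemma bidegree_le_pvar_Inl: "bidegree_le d 1 0 (pvar (Inl i))"
  by (simp add: bidegree_le_def pvar_def vdeg_def edeg_def lookup_single when_def)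

lemma bidegree_le_pvar_Inr: "bidegree_le d 0 1 (pvar (Inr i))"
  by (simp add: bidegree_le_def pvar_def vdeg_def edeg_def lookup_single when_def)

lemma bidegree_le_pdot:
  assumes "\<And>j. bidegree_le d a b (x j)"
  shows "bidegree_le d a b (pdot d x w)"
  unfolding pdot_def
proof (rule bidegree_le_sum)
  fix j
  show "bidegree_le d a b (x j * pconst (w j))"
    using bidegree_le_mult[OF assms bidegree_le_pconst[of d 0 0]] by simp
qed

lemma bidegree_le_cross_compress_Suc:
  assumes layer: "cross_compress d wVV wEV wVE wEE bV bE l = (v, e)"
    and v: "\<And>i. bidegree_le d a b (v i)" and e: "\<And>i. bidegree_le d a' b' (e i)"
  shows "bidegree_le d (a + a') (b + b') (fst (cross_compress d wVV wEV wVE wEE bV bE (Suc l)) i)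
       \<and> bidegree_le d (a + a') (b + b') (snd (cross_compress d wVV wEV wVE wEE bV bE (Suc l)) i)"
proof -
  have ve: "bidegree_le d (a + a') (b + b') (v i * pdot d e w)" for i w
    using bidegree_le_mult[OF v bidegree_le_pdot[OF e]] .
  have ev: "bidegree_le d (a + a') (b + b') (e i * pdot d v w)" for i w
    using bidegree_le_mult[OF e bidegree_le_pdot[OF v]] by (simp add: add.commute)
  show ?thesis
    using layer by (simp add: bidegree_le_add bidegree_le_pconst ve ev)
qed

lemma bidegree_le_cross_compress:
  "bidegree_le d (2 ^ l) (2 ^ l) (fst (cross_compress d wVV wEV wVE wEE bV bE (Suc l)) i)
   \<and> bidegree_le d (2 ^ l) (2 ^ l) (snd (cross_compress d wVV wEV wVE wEE bV bE (Suc l)) i)"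
proof (induction l arbitrary: i)
  case 0
  show ?case
    using bidegree_le_cross_compress_Suc[OF cross_compress.simps(1)
        bidegree_le_pvar_Inl bidegree_le_pvar_Inr]
    by simp
next
  case (Suc l)
  obtain v e where "cross_compress d wVV wEV wVE wEE bV bE (Suc l) = (v, e)"
    by fastforce
  with Suc.IH show ?case
    using bidegree_le_cross_compress_Suc[of d wVV wEV wVE wEE bV bE "Suc l" v e "2 ^ l" "2 ^ l"]
    by (simp add: mult_2)
qed

lemma bidegree_le_cross_terms:
  assumes "bidegree_le d a a p"
  shows "(\<forall>m \<in> cross_terms d p. vdeg d m + edeg d m \<le> 2 * a) \<and>
         (\<forall>m \<in> cross_terms d p. vdeg d m + edeg d m = 2 * a \<longrightarrow> vdeg d m = a \<and> edeg d m = a)"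
  using assms by (auto simp: bidegree_le_def cross_terms_def)

theorem theorem1:
  fixes d L :: nat
    and wVV wEV wVE wEE bV bE :: "nat \<Rightarrow> nat \<Rightarrow> real"
  assumes "d \<ge> 1" and "L \<ge> 1"
  shows "\<forall>p \<in> {psum d (fst (cross_compress d wVV wEV wVE wEE bV bE L)),
                  psum d (snd (cross_compress d wVV wEV wVE wEE bV bE L))}.
           (\<forall>m \<in> cross_terms d p. vdeg d m + edeg d m \<le> 2 ^ L) \<and>
           (\<forall>m \<in> cross_terms d p. vdeg d m + edeg d m = 2 ^ L \<longrightarrow>
               vdeg d m = 2 ^ (L - 1) \<and> edeg d m = 2 ^ (L - 1))"
proof -
  obtain l where L: "L = Suc l"
    using assms(2) by (cases L) auto
  have "\<forall>p \<in> {psum d (fst (cross_compress d wVV wEV wVE wEE bV bE L)),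
               psum d (snd (cross_compress d wVV wEV wVE wEE bV bE L))}.
          bidegree_le d (2 ^ l) (2 ^ l) p"
    unfolding L psum_def using bidegree_le_cross_compress by (auto intro!: bidegree_le_sum)
  moreover have "(2::nat) ^ L = 2 * 2 ^ l" "L - 1 = l"
    using L by simp_all
  ultimately show ?thesis
    using bidegree_le_cross_terms[of d "2 ^ l"] by (simp only: ball_simps) blast
qed

end
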